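(* For all integers $r,q\ge1$, every $(3,2r)$-modular variety is $(2^{q+1}-1,\,2r^q)$-modular.
   Context: $\circ$ denotes relational composition, juxtaposition denotes intersection. For relations $X,Y$ and $m\ge1$, $X\circ_m Y$ denotes $X\circ Y\circ X\circ\cdots$ with $m$ factors. For $m\ge3$, a variety $\mathcal V$ is $(m,k)$-modular if every algebra in $\mathcal V$ satisfies $\alpha(\beta\circ_m\alpha\gamma)\subseteq\alpha\beta\circ_k\alpha\gamma$ for all congruences $\alpha,\beta,\gamma$. *)

theory Defs
  imports Main
begin

datatype ('f, 'v) trm = Var 'v | Fun 'f "('f, 'v) trm list"

fun wf_trm :: "('f \<Rightarrow> nat) \<Rightarrow> ('f, 'v) trm \<Rightarrow> bool" where
  "wf_trm ar (Var v) = True"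
| "wf_trm ar (Fun f ts) = (length ts = ar f \<and> (\<forall>t \<in> set ts. wf_trm ar t))"

definition wf_identities :: "('f \<Rightarrow> nat) \<Rightarrow> (('f, nat) trm \<times> ('f, nat) trm) set \<Rightarrow> bool" where
  "wf_identities ar \<Sigma> \<longleftrightarrow> (\<forall>(s, t) \<in> \<Sigma>. wf_trm ar s \<and> wf_trm ar t)"

definition algebra :: "('f \<Rightarrow> nat) \<Rightarrow> 'a set \<Rightarrow> ('f \<Rightarrow> 'a list \<Rightarrow> 'a) \<Rightarrow> bool" where
  "algebra ar A I \<longleftrightarrow> (\<forall>f xs. length xs = ar f \<and> set xs \<subseteq> A \<longrightarrow> I f xs \<in> A)"

fun eval :: "('f \<Rightarrow> 'a list \<Rightarrow> 'a) \<Rightarrow> ('v \<Rightarrow> 'a) \<Rightarrow> ('f, 'v) trm \<Rightarrow> 'a" where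
  "eval I \<rho> (Var v) = \<rho> v"
| "eval I \<rho> (Fun f ts) = I f (map (eval I \<rho>) ts)"

definition satisfies :: "'a set \<Rightarrow> ('f \<Rightarrow> 'a list \<Rightarrow> 'a) \<Rightarrow> ('f, 'v) trm \<times> ('f, 'v) trm \<Rightarrow> bool" where
  "satisfies A I e \<longleftrightarrow> (\<forall>\<rho>. range \<rho> \<subseteq> A \<longrightarrow> eval I \<rho> (fst e) = eval I \<rho> (snd e))"

definition in_variety :: "('f \<Rightarrow> nat) \<Rightarrow> (('f, nat) trm \<times> ('f, nat) trm) set
    \<Rightarrow> 'a set \<Rightarrow> ('f \<Rightarrow> 'a list \<Rightarrow> 'a) \<Rightarrow> bool" where
  "in_variety ar \<Sigma> A I \<longleftrightarrow> algebra ar A I \<and> (\<forall>e \<in> \<Sigma>. satisfies A I e)"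

definition congruence :: "('f \<Rightarrow> nat) \<Rightarrow> 'a set \<Rightarrow> ('f \<Rightarrow> 'a list \<Rightarrow> 'a) \<Rightarrow> 'a rel \<Rightarrow> bool" where
  "congruence ar A I \<theta> \<longleftrightarrow> equiv A \<theta> \<and>
     (\<forall>f xs ys. length xs = ar f \<and> list_all2 (\<lambda>x y. (x, y) \<in> \<theta>) xs ys
        \<longrightarrow> (I f xs, I f ys) \<in> \<theta>)"

fun alt :: "'a rel \<Rightarrow> 'a rel \<Rightarrow> nat \<Rightarrow> 'a rel" where
  "alt X Y 0 = Id"
| "alt X Y (Suc 0) = X"
| "alt X Y (Suc (Suc n)) = X O alt Y X (Suc n)"

text \<open>(m,k)-modularity of the variety defined by \<Sigma>, for all its algebras whose
  carrier lives in the type 'a.\<close>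
definition mk_modular :: "'a itself \<Rightarrow> ('f \<Rightarrow> nat) \<Rightarrow> (('f, nat) trm \<times> ('f, nat) trm) set
    \<Rightarrow> nat \<Rightarrow> nat \<Rightarrow> bool" where
  "mk_modular _ ar \<Sigma> m k \<longleftrightarrow>
     (\<forall>(A :: 'a set) I. in_variety ar \<Sigma> A I \<longrightarrow>
       (\<forall>\<alpha> \<beta> \<gamma>. congruence ar A I \<alpha> \<and> congruence ar A I \<beta> \<and> congruence ar A I \<gamma> \<longrightarrow>
          \<alpha> \<inter> alt \<beta> (\<alpha> \<inter> \<gamma>) m \<subseteq> alt (\<alpha> \<inter> \<beta>) (\<alpha> \<inter> \<gamma>) k))"

end

(* Applying (3,2r)-modularity in the free algebra on x, y, z, w to the kernels \<alpha>, \<beta>, \<gamma> of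
   the substitutions (x,y,y,x), (x,x,w,w), (x,y,y,w), where x \<beta> y \<alpha>\<gamma> z \<beta> w and x \<alpha> w, yields
   Day terms t_0, ..., t_2r: t_0 = x, t_2r = w, t_i(x,y,y,x) = x, and t_i = t_(i+1) on
   (x,x,w,w) for even i and on (x,y,y,w) for odd i.
   Induction on q: with h = 2^q and H = \<beta> \<circ>_h \<alpha>\<gamma> we have H \<circ> H^-1 = \<beta> \<circ>_(2h-1) \<alpha>\<gamma>, and a
   pair (a,d) in \<alpha>(\<beta> \<circ>_(4h-1) \<alpha>\<gamma>) factors as a (H \<circ> H^-1) b \<alpha>\<gamma> c (H \<circ> H^-1) d, say with
   a, b H x and c, d H y. The elements t_i(a,b,c,d) join a to d, all within \<alpha> of
   t_i(a,b,b,a) = a: for even i through t_i(x,x,y,y) = t_(i+1)(x,x,y,y), so in H \<circ> H^-1, and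
   for odd i through t_i(a,b,b,d) = t_(i+1)(a,b,b,d), so in \<alpha>\<gamma>. By induction each of the
   2r steps in \<alpha>(H \<circ> H^-1) is a chain \<alpha>\<beta> \<circ>_(2r^q) \<alpha>\<gamma>, and these merge into one of
   length 2r^(q+1). *)

theory Submission
  imports Defs
begin

section \<open>Alternating relational products\<close>

lemma equiv_relcomp_self: "equiv A r \<Longrightarrow> r O r = r"
  by (metis equiv_comp_eq equivE sym_conv_converse_eq)

lemma equiv_reflD: "equiv A r \<Longrightarrow> a \<in> A \<Longrightarrow> (a, a) \<in> r"
  by (meson equivE refl_onD)

lemma equiv_symD: "equiv A r \<Longrightarrow> (a, b) \<in> r \<Longrightarrow> (b, a) \<in> r"
  by (meson equivE symD)

lemma equiv_transD: "equiv A r \<Longrightarrow> (a, b) \<in> r \<Longrightarrow> (b, c) \<in> r \<Longrightarrow> (a, c) \<in> r"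
  by (meson equivE transD)

lemma equiv_Int: "equiv A r \<Longrightarrow> equiv A s \<Longrightarrow> equiv A (r \<inter> s)"
  unfolding equiv_def refl_on_def sym_on_def trans_on_def by blast

lemma alt_Suc: "alt X Y (Suc n) = alt X Y n O (if even n then X else Y)"
proof (induction X Y n rule: alt.induct)
  case (3 X Y n)
  have "alt X Y (Suc (Suc (Suc n))) = X O alt Y X (Suc n) O (if even (Suc n) then Y else X)"
    using 3 by simp
  also have "\<dots> = alt X Y (Suc (Suc n)) O (if even (Suc (Suc n)) then X else Y)"
    by (simp add: O_assoc)
  finally show ?case .
qed simp_all

declare alt.simps(2,3) [simp del]

lemma alt_add: "alt X Y (m + n) = alt X Y m O (if even m then alt X Y n else alt Y X n)"
proof (induction n)
  case (Suc n)
  then show ?case by (simp add: alt_Suc O_assoc)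
qed simp

lemma alt_Suc_left: "alt X Y (Suc n) = X O alt Y X n"
  using alt_add[of X Y 1 n] by (simp add: alt.simps)

lemma converse_alt:
  assumes "converse X = X" "converse Y = Y"
  shows "converse (alt X Y n) = (if even n then alt Y X n else alt X Y n)"
proof (induction n)
  case (Suc n)
  have "converse (alt X Y (Suc n)) = (if even n then X else Y) O converse (alt X Y n)"
    using assms by (simp add: alt_Suc converse_relcomp)
  also have "\<dots> = (if even (Suc n) then alt Y X (Suc n) else alt X Y (Suc n))"
    using Suc.IH by (simp add: alt_Suc_left)
  finally show ?case .
qed simp

lemma alt_mono: "X \<subseteq> X' \<Longrightarrow> Y \<subseteq> Y' \<Longrightarrow> alt X Y n \<subseteq> alt X' Y' n"
  by (induction n) (auto simp: alt_Suc)

lemma Range_alt: "Range (alt X Y (Suc n)) \<subseteq> Range X \<union> Range Y"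
  by (auto simp: alt_Suc split: if_splits)

lemma alt_iff_chain:
  "(a, b) \<in> alt X Y n \<longleftrightarrow>
     (\<exists>g. g 0 = a \<and> g n = b \<and> (\<forall>i<n. (g i, g (Suc i)) \<in> (if even i then X else Y)))"
proof (induction n arbitrary: b)
  case (Suc n)
  show ?case
  proof
    assume "(a, b) \<in> alt X Y (Suc n)"
    then obtain c where "(a, c) \<in> alt X Y n" and cb: "(c, b) \<in> (if even n then X else Y)"
      by (auto simp: alt_Suc)
    with Suc obtain g where "g 0 = a" "g n = c"
      and "\<forall>i<n. (g i, g (Suc i)) \<in> (if even i then X else Y)"
      by blast
    with cb show "\<exists>g. g 0 = a \<and> g (Suc n) = b \<and>
        (\<forall>i<Suc n. (g i, g (Suc i)) \<in> (if even i then X else Y))"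
      by (intro exI[of _ "g(Suc n := b)"]) (auto simp: less_Suc_eq)
  next
    assume "\<exists>g. g 0 = a \<and> g (Suc n) = b \<and>
        (\<forall>i<Suc n. (g i, g (Suc i)) \<in> (if even i then X else Y))"
    then obtain g where "g 0 = a" "g (Suc n) = b"
      and steps: "\<forall>i<Suc n. (g i, g (Suc i)) \<in> (if even i then X else Y)"
      by blast
    moreover have "(a, g n) \<in> alt X Y n"
      unfolding Suc.IH using \<open>g 0 = a\<close> steps by (intro exI[of _ g]) auto
    ultimately show "(a, b) \<in> alt X Y (Suc n)"
      unfolding alt_Suc by blast
  qed
qed auto

lemma alt_relcomp_converse:
  assumes X: "equiv A X" and Y: "equiv A Y" and "h \<ge> 1"
  shows "alt X Y h O converse (alt X Y h) = alt X Y (2 * h - 1)"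
proof -
  obtain n where h: "h = Suc n" using \<open>h \<ge> 1\<close> by (cases h) auto
  define Z where "Z = (if even n then X else Y)"
  have "Z O Z = Z"
    unfolding Z_def using equiv_relcomp_self[OF X] equiv_relcomp_self[OF Y] by simp
  have "converse X = X" "converse Y = Y"
    using X Y by (simp_all add: equiv_def sym_conv_converse_eq)
  then have "alt X Y h O converse (alt X Y h) = alt X Y n O (Z O Z) O converse (alt X Y n)"
    unfolding h Z_def by (simp add: alt_Suc converse_relcomp O_assoc)
  also have "\<dots> = alt X Y h O converse (alt X Y n)"
    unfolding \<open>Z O Z = Z\<close> by (simp add: h Z_def alt_Suc O_assoc)
  also have "\<dots> = alt X Y (h + n)"
    unfolding alt_add using \<open>converse X = X\<close> \<open>converse Y = Y\<close> by (simp add: converse_alt h)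
  also have "h + n = 2 * h - 1"
    using h by simp
  finally show ?thesis .
qed

lemma alt_odd_split:
  assumes "odd m"
  shows "alt X Y (m + Suc m) = alt X Y m O Y O alt X Y m"
  using assms alt_add[of X Y m "Suc m"] alt_Suc_left[of Y X m] by simp

text \<open>Each Y-step between two W-steps is absorbed into the final Y-factor of the
  preceding Z/Y-chain.\<close>
lemma alt_flatten:
  assumes Y: "equiv A Y" and W: "W \<subseteq> alt Z Y k" and k: "even k" "k \<ge> 2"
  shows "alt W Y (2 * r) \<subseteq> alt Z Y (r * k)"
proof (induction r)
  case (Suc r)
  obtain j where j: "k = Suc j" "odd j" using k by (cases k) auto
  have ZY: "alt Z Y k O Y = alt Z Y k"
    using j equiv_relcomp_self[OF Y] by (simp add: alt_Suc O_assoc)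
  have "alt W Y (2 * Suc r) = W O Y O alt W Y (2 * r)"
    using alt_add[of W Y 2 "2 * r"] by (simp add: numeral_2_eq_2 alt.simps O_assoc)
  also have "\<dots> \<subseteq> alt Z Y k O Y O alt Z Y (r * k)"
    using W Suc by (intro relcomp_mono) auto
  also have "\<dots> = alt Z Y (k + r * k)"
    using ZY k alt_add[of Z Y k "r * k"] by (simp add: O_assoc[symmetric])
  finally show ?case by (simp add: add.commute)
qed simp


section \<open>Substitution and the equational theory of a set of identities\<close>

type_synonym 'f identities = "(('f, nat) trm \<times> ('f, nat) trm) set"

fun subst :: "('v \<Rightarrow> ('f, 'w) trm) \<Rightarrow> ('f, 'v) trm \<Rightarrow> ('f, 'w) trm" where
  "subst \<sigma> (Var v) = \<sigma> v"
| "subst \<sigma> (Fun f ts) = Fun f (map (subst \<sigma>) ts)"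

lemma eval_subst: "eval I \<rho> (subst \<sigma> t) = eval I (eval I \<rho> \<circ> \<sigma>) t"
  by (induction t) (auto cong: map_cong)

lemma subst_subst: "subst \<tau> (subst \<sigma> t) = subst (subst \<tau> \<circ> \<sigma>) t"
  by (induction t) auto

lemma wf_subst: "wf_trm ar t \<Longrightarrow> (\<And>v. wf_trm ar (\<sigma> v)) \<Longrightarrow> wf_trm ar (subst \<sigma> t)"
  by (induction t) auto

lemma eval_closed:
  assumes "algebra ar A I" "range \<rho> \<subseteq> A" "wf_trm ar t"
  shows "eval I \<rho> t \<in> A"
  using assms(3)
proof (induction t)
  case (Fun f ts)
  then have "set (map (eval I \<rho>) ts) \<subseteq> A" "length (map (eval I \<rho>) ts) = ar f"
    by auto
  with assms(1) show ?case
    unfolding algebra_def by simp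
qed (use assms(2) in auto)

inductive_set eq_theory :: "('f \<Rightarrow> nat) \<Rightarrow> 'f identities \<Rightarrow> ('f, nat) trm rel"
  for ar \<Sigma> where
  eq_theory_refl: "(t, t) \<in> eq_theory ar \<Sigma>"
| eq_theory_sym: "(s, t) \<in> eq_theory ar \<Sigma> \<Longrightarrow> (t, s) \<in> eq_theory ar \<Sigma>"
| eq_theory_trans: "(s, t) \<in> eq_theory ar \<Sigma> \<Longrightarrow> (t, u) \<in> eq_theory ar \<Sigma> \<Longrightarrow>
    (s, u) \<in> eq_theory ar \<Sigma>"
| eq_theory_cong: "list_all2 (\<lambda>s t. (s, t) \<in> eq_theory ar \<Sigma>) ss ts \<Longrightarrow>
    (Fun f ss, Fun f ts) \<in> eq_theory ar \<Sigma>"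
| eq_theory_axiom: "(s, t) \<in> \<Sigma> \<Longrightarrow> (\<And>v. wf_trm ar (\<sigma> v)) \<Longrightarrow>
    (subst \<sigma> s, subst \<sigma> t) \<in> eq_theory ar \<Sigma>"

lemma equiv_eq_theory: "equiv UNIV (eq_theory ar \<Sigma>)"
  unfolding equiv_def refl_on_def sym_on_def trans_on_def by (auto intro: eq_theory.intros)

lemma eq_theory_class_eq_iff:
  "eq_theory ar \<Sigma> `` {s} = eq_theory ar \<Sigma> `` {t} \<longleftrightarrow> (s, t) \<in> eq_theory ar \<Sigma>"
  using eq_equiv_class_iff[OF equiv_eq_theory] by blast

lemma eq_theory_sound:
  assumes "(s, t) \<in> eq_theory ar \<Sigma>" "in_variety ar \<Sigma> A I" "range \<rho> \<subseteq> A"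
  shows "eval I \<rho> s = eval I \<rho> t"
  using assms
proof (induction arbitrary: \<rho> rule: eq_theory.induct)
  case (eq_theory_cong ss ts f)
  then have "map (eval I \<rho>) ss = map (eval I \<rho>) ts"
    by (induction ss ts rule: list_all2_induct) auto
  then show ?case by simp
next
  case (eq_theory_axiom s t \<sigma>)
  have "range (eval I \<rho> \<circ> \<sigma>) \<subseteq> A"
    using eval_closed eq_theory_axiom.prems eq_theory_axiom.hyps(2)
    unfolding in_variety_def by fastforce
  with eq_theory_axiom show ?case
    unfolding in_variety_def satisfies_def by (auto simp: eval_subst)
qed auto

lemma eq_theory_subst:
  assumes "(s, t) \<in> eq_theory ar \<Sigma>" "\<And>v. wf_trm ar (\<tau> v)"
  shows "(subst \<tau> s, subst \<tau> t) \<in> eq_theory ar \<Sigma>"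
  using assms(1)
proof (induction rule: eq_theory.induct)
  case (eq_theory_cong ss ts f)
  then have "list_all2 (\<lambda>s t. (s, t) \<in> eq_theory ar \<Sigma>) (map (subst \<tau>) ss) (map (subst \<tau>) ts)"
    by (induction ss ts rule: list_all2_induct) auto
  then show ?case by (auto intro: eq_theory.eq_theory_cong)
next
  case (eq_theory_axiom s t \<sigma>)
  then have "(subst (subst \<tau> \<circ> \<sigma>) s, subst (subst \<tau> \<circ> \<sigma>) t) \<in> eq_theory ar \<Sigma>"
    using assms(2) by (intro eq_theory.eq_theory_axiom) (auto intro: wf_subst)
  then show ?case by (simp add: subst_subst)
qed (auto intro: eq_theory.intros)


section \<open>Kernels and free algebras\<close>

definition ker :: "'a set \<Rightarrow> ('a \<Rightarrow> 'b) \<Rightarrow> 'a rel" where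
  "ker A h = {(x, y). x \<in> A \<and> y \<in> A \<and> h x = h y}"

lemma congruence_ker:
  assumes alg: "algebra ar A I"
    and hom: "\<And>f xs. length xs = ar f \<Longrightarrow> set xs \<subseteq> A \<Longrightarrow> h (I f xs) = J f (map h xs)"
  shows "congruence ar A I (ker A h)"
  unfolding congruence_def
proof (intro conjI allI impI)
  show "equiv A (ker A h)"
    unfolding ker_def equiv_def refl_on_def sym_on_def trans_on_def by auto
next
  fix f xs ys
  assume "length xs = ar f \<and> list_all2 (\<lambda>x y. (x, y) \<in> ker A h) xs ys"
  then have xs: "length xs = ar f" "set xs \<subseteq> A" and ys: "length ys = ar f" "set ys \<subseteq> A"
    and "map h xs = map h ys"
    by (auto simp: ker_def list_all2_conv_all_nth in_set_conv_nth intro: nth_equalityI)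
  then show "(I f xs, I f ys) \<in> ker A h"
    using alg hom[OF xs] hom[OF ys] unfolding ker_def algebra_def by simp
qed

definition free_carrier :: "('f \<Rightarrow> nat) \<Rightarrow> 'f identities \<Rightarrow> ('f, nat) trm set set" where
  "free_carrier ar \<Sigma> = {eq_theory ar \<Sigma> `` {t} | t. wf_trm ar t}"

definition free_rep :: "('f \<Rightarrow> nat) \<Rightarrow> 'f identities \<Rightarrow> ('f, nat) trm set \<Rightarrow> ('f, nat) trm" where
  "free_rep ar \<Sigma> C = (SOME t. wf_trm ar t \<and> C = eq_theory ar \<Sigma> `` {t})"

definition free_op :: "('f \<Rightarrow> nat) \<Rightarrow> 'f identities \<Rightarrow> 'f \<Rightarrow> ('f, nat) trm set list \<Rightarrow> ('f, nat) trm set"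
  where "free_op ar \<Sigma> f Cs = eq_theory ar \<Sigma> `` {Fun f (map (free_rep ar \<Sigma>) Cs)}"

definition free_subst ::
    "('f \<Rightarrow> nat) \<Rightarrow> 'f identities \<Rightarrow> (nat \<Rightarrow> ('f, nat) trm) \<Rightarrow> ('f, nat) trm set \<Rightarrow> ('f, nat) trm set"
  where "free_subst ar \<Sigma> \<tau> C = eq_theory ar \<Sigma> `` {subst \<tau> (free_rep ar \<Sigma> C)}"

abbreviation subst_ker ::
    "('f \<Rightarrow> nat) \<Rightarrow> 'f identities \<Rightarrow> (nat \<Rightarrow> ('f, nat) trm) \<Rightarrow> ('f, nat) trm set rel"
  where "subst_ker ar \<Sigma> \<tau> \<equiv> ker (free_carrier ar \<Sigma>) (free_subst ar \<Sigma> \<tau>)"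

lemma class_in_free_carrier: "wf_trm ar t \<Longrightarrow> eq_theory ar \<Sigma> `` {t} \<in> free_carrier ar \<Sigma>"
  unfolding free_carrier_def by blast

lemma free_rep:
  assumes "C \<in> free_carrier ar \<Sigma>"
  shows "wf_trm ar (free_rep ar \<Sigma> C)" and "C = eq_theory ar \<Sigma> `` {free_rep ar \<Sigma> C}"
proof -
  have "\<exists>t. wf_trm ar t \<and> C = eq_theory ar \<Sigma> `` {t}"
    using assms unfolding free_carrier_def by blast
  then have "wf_trm ar (free_rep ar \<Sigma> C) \<and> C = eq_theory ar \<Sigma> `` {free_rep ar \<Sigma> C}"
    unfolding free_rep_def by (rule someI_ex)
  then show "wf_trm ar (free_rep ar \<Sigma> C)" and "C = eq_theory ar \<Sigma> `` {free_rep ar \<Sigma> C}"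
    by auto
qed

lemma free_rep_class:
  "wf_trm ar t \<Longrightarrow> (free_rep ar \<Sigma> (eq_theory ar \<Sigma> `` {t}), t) \<in> eq_theory ar \<Sigma>"
  using free_rep(2)[OF class_in_free_carrier] eq_theory_class_eq_iff by metis

lemma algebra_free: "algebra ar (free_carrier ar \<Sigma>) (free_op ar \<Sigma>)"
  unfolding algebra_def free_op_def
proof (intro allI impI)
  fix f Cs
  assume "length Cs = ar f \<and> set Cs \<subseteq> free_carrier ar \<Sigma>"
  then have "wf_trm ar (Fun f (map (free_rep ar \<Sigma>) Cs))"
    using free_rep(1) by auto
  then show "eq_theory ar \<Sigma> `` {Fun f (map (free_rep ar \<Sigma>) Cs)} \<in> free_carrier ar \<Sigma>"
    by (rule class_in_free_carrier)
qed

lemma eval_free: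
  assumes "wf_trm ar t" "range \<rho> \<subseteq> free_carrier ar \<Sigma>"
  shows "eval (free_op ar \<Sigma>) \<rho> t = eq_theory ar \<Sigma> `` {subst (free_rep ar \<Sigma> \<circ> \<rho>) t}"
  using assms(1)
proof (induction t)
  case (Var v)
  have "\<rho> v \<in> free_carrier ar \<Sigma>"
    using assms(2) by auto
  then show ?case
    using free_rep(2) by (metis comp_apply eval.simps(1) subst.simps(1))
next
  case (Fun f ts)
  let ?\<sigma> = "free_rep ar \<Sigma> \<circ> \<rho>"
  have "(free_rep ar \<Sigma> (eval (free_op ar \<Sigma>) \<rho> t), subst ?\<sigma> t) \<in> eq_theory ar \<Sigma>"
    if "t \<in> set ts" for t
  proof -
    have "\<And>v. wf_trm ar (?\<sigma> v)"
      using assms(2) free_rep(1) by auto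
    then have "wf_trm ar (subst ?\<sigma> t)"
      using Fun.prems that by (auto intro: wf_subst)
    moreover have "eval (free_op ar \<Sigma>) \<rho> t = eq_theory ar \<Sigma> `` {subst ?\<sigma> t}"
      using Fun.IH that Fun.prems by (simp add: comp_def)
    ultimately show ?thesis
      by (simp add: free_rep_class)
  qed
  then have "(Fun f (map (free_rep ar \<Sigma> \<circ> eval (free_op ar \<Sigma>) \<rho>) ts), subst ?\<sigma> (Fun f ts))
      \<in> eq_theory ar \<Sigma>"
    by (auto intro!: eq_theory_cong simp: list_all2_map1 list_all2_map2 list_all2_same)
  then show ?case
    by (subst eval.simps, subst free_op_def) (simp add: eq_theory_class_eq_iff comp_def)
qed

lemma free_in_variety:
  fixes ar :: "'f \<Rightarrow> nat"
  assumes "wf_identities ar \<Sigma>"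
  shows "in_variety ar \<Sigma> (free_carrier ar \<Sigma>) (free_op ar \<Sigma>)"
  unfolding in_variety_def satisfies_def
proof (intro conjI algebra_free ballI allI impI)
  fix e and \<rho> :: "nat \<Rightarrow> ('f, nat) trm set"
  assume e: "e \<in> \<Sigma>" and \<rho>: "range \<rho> \<subseteq> free_carrier ar \<Sigma>"
  obtain s t where st: "e = (s, t)" by (cases e)
  have "wf_trm ar s" "wf_trm ar t"
    using assms e st unfolding wf_identities_def by auto
  moreover have "\<And>v. wf_trm ar ((free_rep ar \<Sigma> \<circ> \<rho>) v)"
    using \<rho> free_rep(1) by auto
  then have "(subst (free_rep ar \<Sigma> \<circ> \<rho>) s, subst (free_rep ar \<Sigma> \<circ> \<rho>) t) \<in> eq_theory ar \<Sigma>"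
    using e st by (intro eq_theory_axiom) auto
  ultimately show "eval (free_op ar \<Sigma>) \<rho> (fst e) = eval (free_op ar \<Sigma>) \<rho> (snd e)"
    using st \<rho> by (simp add: eval_free eq_theory_class_eq_iff)
qed

lemma free_subst_class:
  assumes "wf_trm ar t" "\<And>v. wf_trm ar (\<tau> v)"
  shows "free_subst ar \<Sigma> \<tau> (eq_theory ar \<Sigma> `` {t}) = eq_theory ar \<Sigma> `` {subst \<tau> t}"
  unfolding free_subst_def eq_theory_class_eq_iff
  using eq_theory_subst[OF free_rep_class[OF assms(1)] assms(2)] .

lemma free_subst_hom:
  assumes \<tau>: "\<And>v. wf_trm ar (\<tau> v)"
    and Cs: "length Cs = ar f" "set Cs \<subseteq> free_carrier ar \<Sigma>"
  shows "free_subst ar \<Sigma> \<tau> (free_op ar \<Sigma> f Cs)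
    = free_op ar \<Sigma> f (map (free_subst ar \<Sigma> \<tau>) Cs)"
proof -
  have wf: "wf_trm ar (free_rep ar \<Sigma> C)" if "C \<in> set Cs" for C
    using that Cs free_rep(1) by blast
  have "free_subst ar \<Sigma> \<tau> (free_op ar \<Sigma> f Cs)
      = eq_theory ar \<Sigma> `` {Fun f (map (subst \<tau> \<circ> free_rep ar \<Sigma>) Cs)}"
    unfolding free_op_def using wf Cs(1) by (subst free_subst_class) (auto intro: wf_subst \<tau>)
  also have "\<dots> = free_op ar \<Sigma> f (map (free_subst ar \<Sigma> \<tau>) Cs)"
  proof -
    have "(subst \<tau> (free_rep ar \<Sigma> C), free_rep ar \<Sigma> (free_subst ar \<Sigma> \<tau> C)) \<in> eq_theory ar \<Sigma>"
      if "C \<in> set Cs" for C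
      unfolding free_subst_def
      using free_rep_class[OF wf_subst[OF wf[OF that] \<tau>]] by (rule eq_theory_sym)
    then have "(Fun f (map (subst \<tau> \<circ> free_rep ar \<Sigma>) Cs),
        Fun f (map (free_rep ar \<Sigma> \<circ> free_subst ar \<Sigma> \<tau>) Cs)) \<in> eq_theory ar \<Sigma>"
      by (auto intro!: eq_theory_cong simp: list_all2_map1 list_all2_map2 list_all2_same)
    then show ?thesis
      by (simp add: free_op_def eq_theory_class_eq_iff)
  qed
  finally show ?thesis .
qed

lemma congruence_subst_ker:
  "(\<And>v. wf_trm ar (\<tau> v)) \<Longrightarrow> congruence ar (free_carrier ar \<Sigma>) (free_op ar \<Sigma>) (subst_ker ar \<Sigma> \<tau>)"
  by (rule congruence_ker[OF algebra_free], rule free_subst_hom) auto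

lemma Var_classes_in_subst_ker:
  assumes "\<And>v. wf_trm ar (\<tau> v)" "\<tau> i = \<tau> j"
  shows "(eq_theory ar \<Sigma> `` {Var i}, eq_theory ar \<Sigma> `` {Var j}) \<in> subst_ker ar \<Sigma> \<tau>"
  unfolding ker_def using assms by (simp add: class_in_free_carrier free_subst_class)

definition compatible :: "('f \<Rightarrow> nat) \<Rightarrow> ('f \<Rightarrow> 'a list \<Rightarrow> 'a) \<Rightarrow> 'a rel \<Rightarrow> bool" where
  "compatible ar I R \<longleftrightarrow>
     (\<forall>f xs ys. length xs = ar f \<and> list_all2 (\<lambda>x y. (x, y) \<in> R) xs ys \<longrightarrow> (I f xs, I f ys) \<in> R)"

lemma congruence_imp_equiv: "congruence ar A I R \<Longrightarrow> equiv A R"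
  unfolding congruence_def by simp

lemma congruence_imp_compatible: "congruence ar A I R \<Longrightarrow> compatible ar I R"
  unfolding congruence_def compatible_def by blast

lemma compatible_Id: "compatible ar I Id"
  unfolding compatible_def by (auto simp: list_all2_eq[symmetric])

lemma compatible_Int: "compatible ar I R \<Longrightarrow> compatible ar I S \<Longrightarrow> compatible ar I (R \<inter> S)"
  unfolding compatible_def by (metis (no_types, lifting) IntD1 IntD2 IntI list_all2_mono)

lemma compatible_relcomp:
  assumes R: "compatible ar I R" and S: "compatible ar I S"
  shows "compatible ar I (R O S)"
  unfolding compatible_def
proof (intro allI impI, elim conjE)
  fix f xs ys
  assume len: "length xs = ar f" and "list_all2 (\<lambda>x y. (x, y) \<in> R O S) xs ys"
  then obtain zs where xz: "list_all2 (\<lambda>x y. (x, y) \<in> R) xs zs"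
    and zy: "list_all2 (\<lambda>x y. (x, y) \<in> S) zs ys"
    by (auto simp: relcompp_relcomp_eq[symmetric] list.rel_compp)
  moreover have "length zs = ar f"
    using len list_all2_lengthD[OF xz] by simp
  ultimately show "(I f xs, I f ys) \<in> R O S"
    using R S len unfolding compatible_def by blast
qed

lemma compatible_alt: "compatible ar I X \<Longrightarrow> compatible ar I Y \<Longrightarrow> compatible ar I (alt X Y n)"
  by (induction n) (simp_all add: compatible_Id compatible_relcomp alt_Suc)

lemma compatible_eval:
  assumes "compatible ar I R" "wf_trm ar t" "\<And>v. (\<rho> v, \<rho>' v) \<in> R"
  shows "(eval I \<rho> t, eval I \<rho>' t) \<in> R"
  using assms(2)
proof (induction t)
  case (Fun f ts)
  then have "list_all2 (\<lambda>x y. (x, y) \<in> R) (map (eval I \<rho>) ts) (map (eval I \<rho>') ts)"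
    by (auto simp: list_all2_map1 list_all2_map2 list_all2_same)
  with assms(1) Fun.prems show ?case
    unfolding compatible_def by simp
qed (use assms(3) in simp)

section \<open>Day terms\<close>

text \<open>The variables 0, 1, 2, 3 play the roles of x, y, z, w. Sending all other variables
  to the value of x makes quad closed under composition (comp_quad).\<close>
definition quad :: "'a \<Rightarrow> 'a \<Rightarrow> 'a \<Rightarrow> 'a \<Rightarrow> nat \<Rightarrow> 'a" where
  "quad a b c d v = (if v = 1 then b else if v = 2 then c else if v = 3 then d else a)"

lemma quad_simps [simp]:
  "quad a b c d 0 = a" "quad a b c d (Suc 0) = b" "quad a b c d 2 = c" "quad a b c d 3 = d"
  by (simp_all add: quad_def)

lemma comp_quad: "f \<circ> quad a b c d = quad (f a) (f b) (f c) (f d)"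
  by (simp add: fun_eq_iff quad_def)

lemma range_quad: "range (quad a b c d) \<subseteq> {a, b, c, d}"
  by (auto simp: quad_def)

lemma wf_quad_Var: "wf_trm ar (quad (Var i) (Var j) (Var k) (Var l) v)"
  by (simp add: quad_def)

lemma eval_subst_quad:
  "eval I \<rho> (subst (quad (Var i) (Var j) (Var k) (Var l)) t)
    = eval I (quad (\<rho> i) (\<rho> j) (\<rho> k) (\<rho> l)) t"
  by (simp add: eval_subst comp_quad)

lemma compatible_eval_quad:
  assumes "compatible ar I R" "wf_trm ar t"
    and "(a, a') \<in> R" "(b, b') \<in> R" "(c, c') \<in> R" "(d, d') \<in> R"
  shows "(eval I (quad a b c d) t, eval I (quad a' b' c' d') t) \<in> R"
  using assms by (intro compatible_eval) (simp_all add: quad_def)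

abbreviation xyyx :: "nat \<Rightarrow> ('f, nat) trm" where "xyyx \<equiv> quad (Var 0) (Var 1) (Var 1) (Var 0)"
abbreviation xxww :: "nat \<Rightarrow> ('f, nat) trm" where "xxww \<equiv> quad (Var 0) (Var 0) (Var 3) (Var 3)"
abbreviation xyyw :: "nat \<Rightarrow> ('f, nat) trm" where "xyyw \<equiv> quad (Var 0) (Var 1) (Var 1) (Var 3)"

definition day_terms :: "('f \<Rightarrow> nat) \<Rightarrow> 'f identities \<Rightarrow> nat \<Rightarrow> (nat \<Rightarrow> ('f, nat) trm) \<Rightarrow> bool" where
  "day_terms ar \<Sigma> n t \<longleftrightarrow>
    (\<forall>i\<le>n. wf_trm ar (t i)) \<and> (t 0, Var 0) \<in> eq_theory ar \<Sigma> \<and> (t n, Var 3) \<in> eq_theory ar \<Sigma> \<and>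
    (\<forall>i\<le>n. (subst xyyx (t i), Var 0) \<in> eq_theory ar \<Sigma>) \<and>
    (\<forall>i<n. even i \<longrightarrow> (subst xxww (t i), subst xxww (t (Suc i))) \<in> eq_theory ar \<Sigma>) \<and>
    (\<forall>i<n. odd i \<longrightarrow> (subst xyyw (t i), subst xyyw (t (Suc i))) \<in> eq_theory ar \<Sigma>)"

lemma mk_modularD:
  fixes A :: "'a set"
  assumes "mk_modular TYPE('a) ar \<Sigma> m k" "in_variety ar \<Sigma> A I"
    and "congruence ar A I \<alpha>" "congruence ar A I \<beta>" "congruence ar A I \<gamma>"
  shows "\<alpha> \<inter> alt \<beta> (\<alpha> \<inter> \<gamma>) m \<subseteq> alt (\<alpha> \<inter> \<beta>) (\<alpha> \<inter> \<gamma>) k"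
proof -
  from assms(1) have "in_variety ar \<Sigma> A I \<longrightarrow> (\<forall>\<alpha> \<beta> \<gamma>.
      congruence ar A I \<alpha> \<and> congruence ar A I \<beta> \<and> congruence ar A I \<gamma> \<longrightarrow>
      \<alpha> \<inter> alt \<beta> (\<alpha> \<inter> \<gamma>) m \<subseteq> alt (\<alpha> \<inter> \<beta>) (\<alpha> \<inter> \<gamma>) k)"
    unfolding mk_modular_def by (elim allE)
  with assms(2-5) show ?thesis
    by blast
qed

lemma free_generators_chain:
  fixes ar :: "'f \<Rightarrow> nat"
  assumes "wf_identities ar \<Sigma>" and "mk_modular TYPE(('f, nat) trm set) ar \<Sigma> 3 n"
  shows "(eq_theory ar \<Sigma> `` {Var 0}, eq_theory ar \<Sigma> `` {Var 3})
    \<in> alt (subst_ker ar \<Sigma> xyyx \<inter> subst_ker ar \<Sigma> xxww) (subst_ker ar \<Sigma> xyyx \<inter> subst_ker ar \<Sigma> xyyw) n"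
proof -
  let ?X = "\<lambda>i. eq_theory ar \<Sigma> `` {Var i}"
  let ?\<alpha> = "subst_ker ar \<Sigma> xyyx" and ?\<beta> = "subst_ker ar \<Sigma> xxww" and ?\<gamma> = "subst_ker ar \<Sigma> xyyw"
  have "(?X 0, ?X 3) \<in> ?\<alpha>" "(?X 0, ?X 1) \<in> ?\<beta>" "(?X 1, ?X 2) \<in> ?\<alpha> \<inter> ?\<gamma>" "(?X 2, ?X 3) \<in> ?\<beta>"
    by (auto intro!: Var_classes_in_subst_ker wf_quad_Var)
  then have "(?X 0, ?X 3) \<in> ?\<alpha> \<inter> alt ?\<beta> (?\<alpha> \<inter> ?\<gamma>) 3"
    by (auto simp: numeral_3_eq_3 alt.simps)
  moreover have "?\<alpha> \<inter> alt ?\<beta> (?\<alpha> \<inter> ?\<gamma>) 3 \<subseteq> alt (?\<alpha> \<inter> ?\<beta>) (?\<alpha> \<inter> ?\<gamma>) n"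
    by (rule mk_modularD[OF assms(2) free_in_variety[OF assms(1)]]
        congruence_subst_ker wf_quad_Var)+
  ultimately show ?thesis
    by blast
qed

lemma day_terms_exist:
  fixes ar :: "'f \<Rightarrow> nat"
  assumes "wf_identities ar \<Sigma>" and "mk_modular TYPE(('f, nat) trm set) ar \<Sigma> 3 n"
  shows "\<exists>t. day_terms ar \<Sigma> n t"
proof -
  let ?X = "\<lambda>i. eq_theory ar \<Sigma> `` {Var i}"
  obtain g where g0: "g 0 = ?X 0" and gn: "g n = ?X 3"
    and steps: "\<forall>i<n. (g i, g (Suc i)) \<in> subst_ker ar \<Sigma> xyyx \<inter>
       (if even i then subst_ker ar \<Sigma> xxww else subst_ker ar \<Sigma> xyyw)"
    using free_generators_chain[OF assms] unfolding alt_iff_chain if_distrib Int_iff by auto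
  have g_carrier: "g i \<in> free_carrier ar \<Sigma>" if "i \<le> n" for i
  proof (cases "i < n")
    case True
    then show ?thesis using steps unfolding ker_def by blast
  next
    case False
    then show ?thesis using that gn by (simp add: class_in_free_carrier)
  qed
  have g_xyyx: "free_subst ar \<Sigma> xyyx (g i) = free_subst ar \<Sigma> xyyx (g 0)" if "i \<le> n" for i
    using that
  proof (induction i)
    case (Suc i)
    then show ?case using steps unfolding ker_def by auto
  qed simp
  define t where "t i = free_rep ar \<Sigma> (g i)" for i
  have subst_t: "eq_theory ar \<Sigma> `` {subst \<tau> (t i)} = free_subst ar \<Sigma> \<tau> (g i)" for \<tau> i
    unfolding t_def free_subst_def ..
  have "day_terms ar \<Sigma> n t"
    unfolding day_terms_def
  proof (intro conjI allI impI)
    show "wf_trm ar (t i)" if "i \<le> n" for i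
      unfolding t_def using free_rep(1)[OF g_carrier[OF that]] .
    show "(t 0, Var 0) \<in> eq_theory ar \<Sigma>" "(t n, Var 3) \<in> eq_theory ar \<Sigma>"
      unfolding t_def g0 gn by (simp_all add: free_rep_class)
    show "(subst xyyx (t i), Var 0) \<in> eq_theory ar \<Sigma>" if "i \<le> n" for i
      unfolding eq_theory_class_eq_iff[symmetric] subst_t g_xyyx[OF that] g0
      by (simp add: free_subst_class wf_quad_Var)
    show "(subst xxww (t i), subst xxww (t (Suc i))) \<in> eq_theory ar \<Sigma>" if "i < n" "even i" for i
      unfolding eq_theory_class_eq_iff[symmetric] subst_t using steps that unfolding ker_def by auto
    show "(subst xyyw (t i), subst xyyw (t (Suc i))) \<in> eq_theory ar \<Sigma>" if "i < n" "odd i" for i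
      unfolding eq_theory_class_eq_iff[symmetric] subst_t using steps that unfolding ker_def by auto
  qed
  then show ?thesis by blast
qed

lemma day_terms_eval:
  assumes V: "in_variety ar \<Sigma> A I" and t: "day_terms ar \<Sigma> n t"
    and abcd: "a \<in> A" "b \<in> A" "c \<in> A" "d \<in> A"
  shows "eval I (quad a b c d) (t 0) = a"
    and "eval I (quad a b c d) (t n) = d"
    and "i \<le> n \<Longrightarrow> eval I (quad a b b a) (t i) = a"
    and "i < n \<Longrightarrow> even i \<Longrightarrow> eval I (quad a a d d) (t i) = eval I (quad a a d d) (t (Suc i))"
    and "i < n \<Longrightarrow> odd i \<Longrightarrow> eval I (quad a b b d) (t i) = eval I (quad a b b d) (t (Suc i))"
proof -
  have range: "range (quad a b c d) \<subseteq> A"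
    using range_quad[of a b c d] abcd by auto
  have sound: "eval I (quad a b c d) s = eval I (quad a b c d) s'"
    if "(s, s') \<in> eq_theory ar \<Sigma>" for s s'
    using eq_theory_sound[OF that V range] .
  note t = t[unfolded day_terms_def]
  show "eval I (quad a b c d) (t 0) = a" "eval I (quad a b c d) (t n) = d"
    using sound[of "t 0" "Var 0"] sound[of "t n" "Var 3"] t by simp_all
  show "eval I (quad a b b a) (t i) = a" if "i \<le> n"
    using sound[of "subst xyyx (t i)" "Var 0"] t that by (simp add: eval_subst_quad)
  show "eval I (quad a a d d) (t i) = eval I (quad a a d d) (t (Suc i))" if "i < n" "even i"
    using sound[of "subst xxww (t i)" "subst xxww (t (Suc i))"] t that
    by (simp add: eval_subst_quad)
  show "eval I (quad a b b d) (t i) = eval I (quad a b b d) (t (Suc i))" if "i < n" "odd i"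
    using sound[of "subst xyyw (t i)" "subst xyyw (t (Suc i))"] t that
    by (simp add: eval_subst_quad)
qed


section \<open>Iterating the modular law\<close>

context
  fixes ar :: "'f \<Rightarrow> nat" and \<Sigma> :: "'f identities" and A :: "'a set" and I n t \<alpha> \<gamma> H a b c d x y
  assumes V: "in_variety ar \<Sigma> A I" and t: "day_terms ar \<Sigma> n t"
    and \<alpha>: "congruence ar A I \<alpha>" and \<gamma>: "congruence ar A I \<gamma>" and H: "compatible ar I H"
    and ad: "(a, d) \<in> \<alpha>" and bc: "(b, c) \<in> \<alpha> \<inter> \<gamma>"
    and ax: "(a, x) \<in> H" and bx: "(b, x) \<in> H" and cy: "(c, y) \<in> H" and dy: "(d, y) \<in> H"
    and xy: "x \<in> A" "y \<in> A"
begin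

lemma day_terms_step:
  assumes "i < n"
  shows "(eval I (quad a b c d) (t i), eval I (quad a b c d) (t (Suc i)))
    \<in> (if even i then \<alpha> \<inter> (H O converse H) else \<alpha> \<inter> \<gamma>)"
proof -
  let ?u = "\<lambda>j. eval I (quad a b c d) (t j)"
  have e\<alpha>: "equiv A \<alpha>" and e\<alpha>\<gamma>: "equiv A (\<alpha> \<inter> \<gamma>)"
    using congruence_imp_equiv[OF \<alpha>] congruence_imp_equiv[OF \<gamma>] by (auto intro: equiv_Int)
  have abcd: "a \<in> A" "b \<in> A" "c \<in> A" "d \<in> A"
    using ad bc equiv_type[OF e\<alpha>] by auto
  have compat: "compatible ar I \<alpha>" "compatible ar I (\<alpha> \<inter> \<gamma>)"
    using \<alpha> \<gamma> by (auto intro: compatible_Int congruence_imp_compatible)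
  have wf: "wf_trm ar (t j)" if "j \<le> n" for j
    using t that unfolding day_terms_def by blast
  show ?thesis
  proof (cases "even i")
    case True
    have u_\<alpha>: "(?u j, a) \<in> \<alpha>" if "j \<le> n" for j
    proof -
      have "(c, b) \<in> \<alpha>" "(d, a) \<in> \<alpha>"
        using ad bc equiv_symD[OF e\<alpha>] by blast+
      from compatible_eval_quad[OF compat(1) wf[OF that]
          equiv_reflD[OF e\<alpha> abcd(1)] equiv_reflD[OF e\<alpha> abcd(2)] this]
      show ?thesis
        unfolding day_terms_eval(3)[OF V t abcd(1,2,2,1) that] .
    qed
    have "(?u i, eval I (quad x x y y) (t i)) \<in> H"
      and "(?u (Suc i), eval I (quad x x y y) (t (Suc i))) \<in> H"
      using assms by (auto intro!: compatible_eval_quad[OF H] wf ax bx cy dy)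
    then have "(?u i, ?u (Suc i)) \<in> H O converse H"
      using day_terms_eval(4)[OF V t xy(1,1,2,2) assms True] by auto
    moreover have "(?u i, ?u (Suc i)) \<in> \<alpha>"
      using assms by (meson equiv_transD[OF e\<alpha>] equiv_symD[OF e\<alpha>] u_\<alpha> Suc_leI less_imp_le_nat)
    ultimately show ?thesis
      using True by simp
  next
    case False
    have r: "(?u j, eval I (quad a b b d) (t j)) \<in> \<alpha> \<inter> \<gamma>" if "j \<le> n" for j
      using compatible_eval_quad[OF compat(2) wf[OF that] equiv_reflD[OF e\<alpha>\<gamma> abcd(1)]
          equiv_reflD[OF e\<alpha>\<gamma> abcd(2)] equiv_symD[OF e\<alpha>\<gamma> bc] equiv_reflD[OF e\<alpha>\<gamma> abcd(4)]] .
    have "(?u i, eval I (quad a b b d) (t (Suc i))) \<in> \<alpha> \<inter> \<gamma>"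
      using r[of i] assms day_terms_eval(5)[OF V t abcd(1,2,2,4) assms False] by simp
    moreover have "(eval I (quad a b b d) (t (Suc i)), ?u (Suc i)) \<in> \<alpha> \<inter> \<gamma>"
      using equiv_symD[OF e\<alpha>\<gamma> r[OF Suc_leI[OF assms]]] .
    ultimately have "(?u i, ?u (Suc i)) \<in> \<alpha> \<inter> \<gamma>"
      by (rule equiv_transD[OF e\<alpha>\<gamma>])
    then show ?thesis
      using False by simp
  qed
qed

lemma day_terms_chain: "(a, d) \<in> alt (\<alpha> \<inter> (H O converse H)) (\<alpha> \<inter> \<gamma>) n"
proof -
  have "a \<in> A" "b \<in> A" "c \<in> A" "d \<in> A"
    using ad bc equiv_type[OF congruence_imp_equiv[OF \<alpha>]] by auto
  then have "eval I (quad a b c d) (t 0) = a" "eval I (quad a b c d) (t n) = d"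
    using day_terms_eval(1,2)[OF V t] by blast+
  with day_terms_step show ?thesis
    unfolding alt_iff_chain by (intro exI[of _ "\<lambda>j. eval I (quad a b c d) (t j)"]) simp
qed

end

lemma day_terms_double:
  assumes t: "day_terms ar \<Sigma> (2 * r) t" and V: "in_variety ar \<Sigma> A I"
    and \<alpha>: "congruence ar A I \<alpha>" and \<beta>: "congruence ar A I \<beta>" and \<gamma>: "congruence ar A I \<gamma>"
    and "h \<ge> 1" and k: "even k" "k \<ge> 2"
    and IH: "\<alpha> \<inter> alt \<beta> (\<alpha> \<inter> \<gamma>) (2 * h - 1) \<subseteq> alt (\<alpha> \<inter> \<beta>) (\<alpha> \<inter> \<gamma>) k"
  shows "\<alpha> \<inter> alt \<beta> (\<alpha> \<inter> \<gamma>) (4 * h - 1) \<subseteq> alt (\<alpha> \<inter> \<beta>) (\<alpha> \<inter> \<gamma>) (r * k)"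
proof (rule subrelI)
  fix a d
  assume ad: "(a, d) \<in> \<alpha> \<inter> alt \<beta> (\<alpha> \<inter> \<gamma>) (4 * h - 1)"
  have e\<beta>: "equiv A \<beta>" and e\<alpha>\<gamma>: "equiv A (\<alpha> \<inter> \<gamma>)"
    using congruence_imp_equiv[OF \<beta>] congruence_imp_equiv[OF \<alpha>] congruence_imp_equiv[OF \<gamma>]
    by (auto intro: equiv_Int)
  define H where "H = alt \<beta> (\<alpha> \<inter> \<gamma>) h"
  have HH: "H O converse H = alt \<beta> (\<alpha> \<inter> \<gamma>) (2 * h - 1)"
    unfolding H_def using alt_relcomp_converse[OF e\<beta> e\<alpha>\<gamma> \<open>h \<ge> 1\<close>] .
  have "Range H \<subseteq> Range \<beta> \<union> Range (\<alpha> \<inter> \<gamma>)"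
    unfolding H_def using Range_alt[of \<beta> "\<alpha> \<inter> \<gamma>" "h - 1"] \<open>h \<ge> 1\<close> by simp
  then have H_range: "Range H \<subseteq> A"
    using e\<beta> e\<alpha>\<gamma> by (auto dest: equiv_type)
  have length_split: "4 * h - 1 = (2 * h - 1) + Suc (2 * h - 1)"
    using \<open>h \<ge> 1\<close> by simp
  have "alt \<beta> (\<alpha> \<inter> \<gamma>) (4 * h - 1) = (H O converse H) O (\<alpha> \<inter> \<gamma>) O (H O converse H)"
    unfolding length_split HH by (rule alt_odd_split) (use \<open>h \<ge> 1\<close> in simp)
  then have "(a, d) \<in> (H O converse H) O (\<alpha> \<inter> \<gamma>) O (H O converse H)"
    using ad by simp
  then obtain b c x y where bc: "(b, c) \<in> \<alpha> \<inter> \<gamma>"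
    and ax: "(a, x) \<in> H" and bx: "(b, x) \<in> H" and cy: "(c, y) \<in> H" and dy: "(d, y) \<in> H"
    by blast
  have "x \<in> A" "y \<in> A"
    using ax cy H_range by auto
  moreover have "compatible ar I H"
    unfolding H_def using \<alpha> \<beta> \<gamma> by (intro compatible_alt compatible_Int congruence_imp_compatible)
  moreover have "(a, d) \<in> \<alpha>"
    using ad by simp
  ultimately have "(a, d) \<in> alt (\<alpha> \<inter> (H O converse H)) (\<alpha> \<inter> \<gamma>) (2 * r)"
    using day_terms_chain[OF V t \<alpha> \<gamma> _ _ bc ax bx cy dy] by blast
  also have "\<dots> \<subseteq> alt (alt (\<alpha> \<inter> \<beta>) (\<alpha> \<inter> \<gamma>) k) (\<alpha> \<inter> \<gamma>) (2 * r)"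
    using IH unfolding HH by (intro alt_mono) auto
  also have "\<dots> \<subseteq> alt (\<alpha> \<inter> \<beta>) (\<alpha> \<inter> \<gamma>) (r * k)"
    using k by (intro alt_flatten[OF e\<alpha>\<gamma>]) auto
  finally show "(a, d) \<in> alt (\<alpha> \<inter> \<beta>) (\<alpha> \<inter> \<gamma>) (r * k)" .
qed

lemma day_terms_imp_iterated_modular:
  assumes t: "day_terms ar \<Sigma> (2 * r) t" and "r \<ge> 1" and V: "in_variety ar \<Sigma> A I"
    and \<alpha>: "congruence ar A I \<alpha>" and \<beta>: "congruence ar A I \<beta>" and \<gamma>: "congruence ar A I \<gamma>"
  shows "\<alpha> \<inter> alt \<beta> (\<alpha> \<inter> \<gamma>) (2 ^ Suc q - 1) \<subseteq> alt (\<alpha> \<inter> \<beta>) (\<alpha> \<inter> \<gamma>) (2 * r ^ q)"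
proof (induction q)
  case 0
  have "\<alpha> \<inter> \<beta> \<subseteq> (\<alpha> \<inter> \<beta>) O (\<alpha> \<inter> \<gamma>)"
  proof (rule subrelI)
    fix a b
    assume ab: "(a, b) \<in> \<alpha> \<inter> \<beta>"
    then have "b \<in> A"
      using equiv_type[OF congruence_imp_equiv[OF \<beta>]] by auto
    then have "(b, b) \<in> \<alpha> \<inter> \<gamma>"
      using congruence_imp_equiv[OF \<alpha>] congruence_imp_equiv[OF \<gamma>] by (simp add: equiv_reflD)
    with ab show "(a, b) \<in> (\<alpha> \<inter> \<beta>) O (\<alpha> \<inter> \<gamma>)"
      by blast
  qed
  then show ?case
    by (simp add: numeral_2_eq_2 alt.simps)
next
  case (Suc q)
  have "\<alpha> \<inter> alt \<beta> (\<alpha> \<inter> \<gamma>) (4 * 2 ^ q - 1) \<subseteq> alt (\<alpha> \<inter> \<beta>) (\<alpha> \<inter> \<gamma>) (r * (2 * r ^ q))"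
    using Suc.IH \<open>r \<ge> 1\<close> by (intro day_terms_double[OF t V \<alpha> \<beta> \<gamma>]) auto
  then show ?case
    by (simp add: mult.left_commute)
qed

theorem theorem3p3:
  fixes ar :: "'f \<Rightarrow> nat"
    and \<Sigma> :: "(('f, nat) trm \<times> ('f, nat) trm) set"
    and r q :: nat
  assumes "wf_identities ar \<Sigma>"
    and "r \<ge> 1" and "q \<ge> 1"
    and "mk_modular TYPE(('f, nat) trm set) ar \<Sigma> 3 (2 * r)"
  shows "mk_modular TYPE('a) ar \<Sigma> (2 ^ (q + 1) - 1) (2 * r ^ q)"
proof -
  obtain t where t: "day_terms ar \<Sigma> (2 * r) t"
    using day_terms_exist[OF assms(1,4)] by blast
  show ?thesis
    unfolding mk_modular_def
  proof (intro allI impI, elim conjE)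
    fix A :: "'a set" and I \<alpha> \<beta> \<gamma>
    assume "in_variety ar \<Sigma> A I" "congruence ar A I \<alpha>" "congruence ar A I \<beta>" "congruence ar A I \<gamma>"
    from day_terms_imp_iterated_modular[OF t \<open>r \<ge> 1\<close> this]
    show "\<alpha> \<inter> alt \<beta> (\<alpha> \<inter> \<gamma>) (2 ^ (q + 1) - 1) \<subseteq> alt (\<alpha> \<inter> \<beta>) (\<alpha> \<inter> \<gamma>) (2 * r ^ q)"
      by simp
  qed
qed

end
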